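(* Let $R$ be a Hermite ring and $X$ a (commuting) indeterminate over $R$ such that the formal power series ring $R[[X]]$ is a Bézout ring. Then $R[[X]]$ is a Hermite ring.
   Context: A matrix $A$ over a ring admits a diagonal reduction if there are invertible matrices $P,Q$ with $PAQ$ diagonal (i.e. entries $a_{ij}=0$ for $i\neq j$). A ring is right Hermite if every $1\times 2$ matrix over it admits a diagonal reduction (left Hermite: every $2\times 1$ matrix). Here "Hermite" means right Hermite. A ring is Bézout if every finitely generated ideal is principal. *)

theory Defs
  imports "Jordan_Normal_Form.Matrix" "HOL-Computational_Algebra.Formal_Power_Series"
begin

definition admits_diagonal_reduction :: "'a::ring_1 mat \<Rightarrow> bool" where
  "admits_diagonal_reduction A \<longleftrightarrow>
     (\<exists>P Q. P \<in> carrier_mat (dim_row A) (dim_row A) \<and> Q \<in> carrier_mat (dim_col A) (dim_col A) \<and>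
            invertible_mat P \<and> invertible_mat Q \<and> diagonal_mat (P * A * Q))"

definition hermite_ring :: "'a::ring_1 itself \<Rightarrow> bool" where
  "hermite_ring TYPE('a) \<longleftrightarrow>
     (\<forall>A :: 'a mat. A \<in> carrier_mat 1 2 \<longrightarrow> admits_diagonal_reduction A)"

definition right_ideal :: "'a::ring_1 set \<Rightarrow> bool" where
  "right_ideal I \<longleftrightarrow> 0 \<in> I \<and> (\<forall>x\<in>I. \<forall>y\<in>I. x + y \<in> I) \<and> (\<forall>x\<in>I. - x \<in> I)
     \<and> (\<forall>x\<in>I. \<forall>r. x * r \<in> I)"

definition right_ideal_gen :: "'a::ring_1 set \<Rightarrow> 'a set" where
  "right_ideal_gen S = \<Inter>{I. right_ideal I \<and> S \<subseteq> I}"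

definition bezout_ring :: "'a::ring_1 itself \<Rightarrow> bool" where
  "bezout_ring TYPE('a) \<longleftrightarrow>
     (\<forall>S :: 'a set. finite S \<longrightarrow> (\<exists>d. right_ideal_gen S = right_ideal_gen {d}))"

end

theory Submission
  imports Defs
begin

text \<open>Let \<open>[a b]\<close> be a row over \<open>R[[X]]\<close>. By the Bezout property \<open>aR[[X]] + bR[[X]] = dR[[X]]\<close>,
  so \<open>a = d a\<^sub>1\<close>, \<open>b = d b\<^sub>1\<close>. Applying the Hermite property of \<open>R\<close> to the constant terms of
  \<open>a\<^sub>1, b\<^sub>1\<close> gives an invertible constant matrix \<open>Q\<close> with \<open>[a b] Q = [a' b']\<close> and \<open>b' = d e\<close>,
  \<open>e(0) = 0\<close>. As \<open>Q\<close> is invertible, \<open>d = a' x + b' y\<close>, so \<open>d (1 - e y) = a' x\<close>; since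
  \<open>1 - e y\<close> is a unit of \<open>R[[X]]\<close>, \<open>b'\<close> is a right multiple of \<open>a'\<close> and one column
  operation turns \<open>[a' b']\<close> into \<open>[a' 0]\<close>.\<close>

lemma invertible_mat_iff_inverse:
  fixes A :: "'a::semiring_1 mat"
  assumes "A \<in> carrier_mat n n"
  shows "invertible_mat A \<longleftrightarrow> (\<exists>B\<in>carrier_mat n n. A * B = 1\<^sub>m n \<and> B * A = 1\<^sub>m n)"
proof
  assume "invertible_mat A"
  then obtain B where AB: "A * B = 1\<^sub>m n" and BA: "B * A = 1\<^sub>m (dim_row B)"
    using assms unfolding invertible_mat_def inverts_mat_def by auto
  have "dim_col B = n" using arg_cong[OF AB, of dim_col] by simp
  moreover have "dim_row B = n" using arg_cong[OF BA, of dim_col] assms by simp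
  ultimately show "\<exists>B\<in>carrier_mat n n. A * B = 1\<^sub>m n \<and> B * A = 1\<^sub>m n"
    using AB BA by auto
qed (use assms in \<open>auto simp: invertible_mat_def inverts_mat_def\<close>)

lemma invertible_mat_mult:
  fixes A B :: "'a::semiring_1 mat"
  assumes A: "A \<in> carrier_mat n n" "invertible_mat A" and B: "B \<in> carrier_mat n n" "invertible_mat B"
  shows "invertible_mat (A * B)"
proof -
  obtain A' where A': "A' \<in> carrier_mat n n" "A * A' = 1\<^sub>m n" "A' * A = 1\<^sub>m n"
    using A invertible_mat_iff_inverse by blast
  obtain B' where B': "B' \<in> carrier_mat n n" "B * B' = 1\<^sub>m n" "B' * B = 1\<^sub>m n"
    using B invertible_mat_iff_inverse by blast
  have "A * B * (B' * A') = A * (B * B') * A'"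
    using A(1) B(1) A'(1) B'(1) by (simp add: assoc_mult_mat[of _ n n _ n _ n])
  also have "\<dots> = 1\<^sub>m n"
    using A A' B' by (simp del: assoc_mult_mat)
  finally have right: "A * B * (B' * A') = 1\<^sub>m n" .
  have "B' * A' * (A * B) = B' * (A' * A) * B"
    using A(1) B(1) A'(1) B'(1) by (simp add: assoc_mult_mat[of _ n n _ n _ n])
  also have "\<dots> = 1\<^sub>m n"
    using A' B B' by (simp del: assoc_mult_mat)
  finally have left: "B' * A' * (A * B) = 1\<^sub>m n" .
  show ?thesis
    unfolding invertible_mat_iff_inverse[OF mult_carrier_mat[OF A(1) B(1)]]
    using mult_carrier_mat[OF B'(1) A'(1)] left right by blast
qed

lemma (in semiring_hom) invertible_mat_hom:
  assumes "A \<in> carrier_mat n n" "invertible_mat A"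
  shows "invertible_mat (mat\<^sub>h A)"
proof -
  obtain B where "B \<in> carrier_mat n n" "A * B = 1\<^sub>m n" "B * A = 1\<^sub>m n"
    using assms invertible_mat_iff_inverse by blast
  then show ?thesis
    using assms by (subst invertible_mat_iff_inverse[of _ n])
      (auto simp: mat_hom_mult[symmetric] mat_hom_one intro!: bexI[of _ "mat\<^sub>h B"])
qed

definition row2 :: "'a \<Rightarrow> 'a \<Rightarrow> 'a mat" where
  "row2 a b = mat 1 2 (\<lambda>(_, j). if j = 0 then a else b)"

lemma row2_carrier [simp]: "row2 a b \<in> carrier_mat 1 2"
  by (simp add: row2_def)

lemma row2_dims [simp]: "dim_row (row2 a b) = 1" "dim_col (row2 a b) = 2"
  by (simp_all add: row2_def)

lemma row2_index [simp]: "row2 a b $$ (0, 0) = a" "row2 a b $$ (0, 1) = b"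
  by (simp_all add: row2_def)

lemma row2_eq_iff: "row2 a b = row2 a' b' \<longleftrightarrow> a = a' \<and> b = b'"
  by (metis row2_index)

lemma carrier_mat_1_2_row2:
  assumes "A \<in> carrier_mat 1 2"
  obtains a b where "A = row2 a b"
  using assms by (intro that[of "A $$ (0, 0)" "A $$ (0, 1)"] eq_matI) (auto simp: row2_def numeral_2_eq_2 less_Suc_eq)

lemma row2_mult:
  fixes a b :: "'a::semiring_0"
  assumes "Q \<in> carrier_mat 2 2"
  shows "row2 a b * Q = row2 (a * Q $$ (0, 0) + b * Q $$ (1, 0)) (a * Q $$ (0, 1) + b * Q $$ (1, 1))"
  using assms by (intro eq_matI) (auto simp: row2_def scalar_prod_def numeral_2_eq_2 less_Suc_eq)

lemma index_mult_mat_1_1: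
  fixes P :: "'a::semiring_0 mat"
  assumes "P \<in> carrier_mat 1 1" "M \<in> carrier_mat 1 n" "j < n"
  shows "(P * M) $$ (0, j) = P $$ (0, 0) * M $$ (0, j)"
  using assms by (simp add: scalar_prod_def)

lemma diagonal_mat_1_2_iff:
  assumes "M \<in> carrier_mat 1 2"
  shows "diagonal_mat M \<longleftrightarrow> M $$ (0, 1) = 0"
  using assms by (auto simp: diagonal_mat_def numeral_2_eq_2 less_Suc_eq)

lemma admits_diagonal_reduction_row2_iff:
  fixes a b :: "'a::ring_1"
  shows "admits_diagonal_reduction (row2 a b) \<longleftrightarrow>
    (\<exists>Q\<in>carrier_mat 2 2. invertible_mat Q \<and> (row2 a b * Q) $$ (0, 1) = 0)"
proof
  assume "admits_diagonal_reduction (row2 a b)"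
  then obtain P Q where P: "P \<in> carrier_mat 1 1" "invertible_mat P" and Q: "Q \<in> carrier_mat 2 2" "invertible_mat Q"
    and diag: "diagonal_mat (P * row2 a b * Q)"
    unfolding admits_diagonal_reduction_def row2_dims by blast
  obtain P' where P': "P' \<in> carrier_mat 1 1" "P' * P = 1\<^sub>m 1"
    using P invertible_mat_iff_inverse by blast
  have "(P * row2 a b * Q) $$ (0, 1) = 0"
    using diag diagonal_mat_1_2_iff[OF mult_carrier_mat[OF mult_carrier_mat[OF P(1) row2_carrier] Q(1)]]
    by blast
  also have "P * row2 a b * Q = P * (row2 a b * Q)"
    by (rule assoc_mult_mat[OF P(1) row2_carrier Q(1)])
  finally have "P $$ (0, 0) * (row2 a b * Q) $$ (0, 1) = 0"
    using index_mult_mat_1_1[OF P(1) mult_carrier_mat[OF row2_carrier Q(1)]] by simp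
  moreover have "P' $$ (0, 0) * P $$ (0, 0) = 1"
    using index_mult_mat_1_1[OF P'(1) P(1)] P'(2) by simp
  ultimately have "(row2 a b * Q) $$ (0, 1) = 0"
    by (metis mult.assoc mult_1 mult_zero_right)
  then show "\<exists>Q\<in>carrier_mat 2 2. invertible_mat Q \<and> (row2 a b * Q) $$ (0, 1) = 0"
    using Q by blast
next
  assume "\<exists>Q\<in>carrier_mat 2 2. invertible_mat Q \<and> (row2 a b * Q) $$ (0, 1) = 0"
  then obtain Q where Q: "Q \<in> carrier_mat 2 2" "invertible_mat Q" "(row2 a b * Q) $$ (0, 1) = 0"
    by blast
  have "invertible_mat (1\<^sub>m 1 :: 'a mat)"
    by (subst invertible_mat_iff_inverse[of _ 1]) auto
  moreover have "diagonal_mat (1\<^sub>m 1 * row2 a b * Q)"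
    unfolding left_mult_one_mat[OF row2_carrier]
    using diagonal_mat_1_2_iff[OF mult_carrier_mat[OF row2_carrier Q(1)]] Q(3) by blast
  ultimately show "admits_diagonal_reduction (row2 a b)"
    unfolding admits_diagonal_reduction_def row2_dims using Q(1,2) one_carrier_mat by blast
qed

definition transvection2 :: "'a::{zero,one} \<Rightarrow> 'a mat" where
  "transvection2 c = mat 2 2 (\<lambda>(i, j). if i = j then 1 else if i = 0 then c else 0)"

lemma transvection2_carrier [simp]: "transvection2 c \<in> carrier_mat 2 2"
  by (simp add: transvection2_def)

lemma transvection2_index [simp]:
  "transvection2 c $$ (0, 0) = 1" "transvection2 c $$ (0, 1) = c"
  "transvection2 c $$ (1, 0) = 0" "transvection2 c $$ (1, 1) = 1"
  by (simp_all add: transvection2_def)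

lemma transvection2_mult:
  fixes c d :: "'a::semiring_1"
  shows "transvection2 c * transvection2 d = transvection2 (c + d)"
  by (intro eq_matI) (auto simp: transvection2_def scalar_prod_def numeral_2_eq_2 less_Suc_eq add.commute)

lemma transvection2_0: "transvection2 (0::'a::semiring_1) = 1\<^sub>m 2"
  by (intro eq_matI) (auto simp: transvection2_def)

lemma invertible_transvection2:
  fixes c :: "'a::ring_1"
  shows "invertible_mat (transvection2 c)"
  unfolding invertible_mat_iff_inverse[OF transvection2_carrier]
  by (intro bexI[of _ "transvection2 (- c)"]) (simp_all add: transvection2_mult transvection2_0)

lemma admits_diagonal_reduction_row2_left_multiple:
  fixes a c :: "'a::ring_1"
  shows "admits_diagonal_reduction (row2 a (a * c))"
proof -
  have "row2 a (a * c) * transvection2 (- c) = row2 a 0"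
    unfolding row2_mult[OF transvection2_carrier] transvection2_index by simp
  then have "(row2 a (a * c) * transvection2 (- c)) $$ (0, 1) = 0"
    by (metis row2_index(2))
  then show ?thesis
    unfolding admits_diagonal_reduction_row2_iff
    using transvection2_carrier invertible_transvection2 by blast
qed

lemma admits_diagonal_reduction_row2_mult:
  fixes a b :: "'a::ring_1"
  assumes "Q \<in> carrier_mat 2 2" "invertible_mat Q" "row2 a b * Q = row2 a' b'"
    and "admits_diagonal_reduction (row2 a' b')"
  shows "admits_diagonal_reduction (row2 a b)"
proof -
  obtain Q' where Q': "Q' \<in> carrier_mat 2 2" "invertible_mat Q'" "(row2 a' b' * Q') $$ (0, 1) = 0"
    using assms(4) unfolding admits_diagonal_reduction_row2_iff by blast
  have "row2 a b * (Q * Q') = row2 a' b' * Q'"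
    using assoc_mult_mat[OF row2_carrier[of a b] assms(1) Q'(1)] assms(3) by simp
  moreover have "Q * Q' \<in> carrier_mat 2 2" "invertible_mat (Q * Q')"
    using assms(1,2) Q'(1,2) by (auto intro: mult_carrier_mat invertible_mat_mult)
  ultimately show ?thesis
    unfolding admits_diagonal_reduction_row2_iff using Q'(3) by metis
qed

lemma right_ideal_right_ideal_gen: "right_ideal (right_ideal_gen S)"
  unfolding right_ideal_gen_def right_ideal_def by blast

lemma right_ideal_gen_least: "right_ideal I \<Longrightarrow> S \<subseteq> I \<Longrightarrow> right_ideal_gen S \<subseteq> I"
  unfolding right_ideal_gen_def by blast

lemma subset_right_ideal_gen: "S \<subseteq> right_ideal_gen S"
  unfolding right_ideal_gen_def by blast

lemma right_ideal_gen_pair: "right_ideal_gen {a, b} = {a * r + b * s |r s. True}"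
proof
  have "right_ideal {a * r + b * s |r s. True}"
    unfolding right_ideal_def
  proof (intro conjI ballI allI)
    show "0 \<in> {a * r + b * s |r s. True}"
      by (auto intro!: exI[of _ 0])
    fix x y t
    assume "x \<in> {a * r + b * s |r s. True}"
    then obtain r s where x: "x = a * r + b * s" by blast
    have "- x = a * (- r) + b * (- s)" "x * t = a * (r * t) + b * (s * t)"
      using x by (simp_all add: algebra_simps)
    then show "- x \<in> {a * r + b * s |r s. True}" "x * t \<in> {a * r + b * s |r s. True}"
      by blast+
    assume "y \<in> {a * r + b * s |r s. True}"
    then obtain r' s' where y: "y = a * r' + b * s'" by blast
    have "x + y = a * (r + r') + b * (s + s')"
      using x y by (simp add: algebra_simps)
    then show "x + y \<in> {a * r + b * s |r s. True}"
      by blast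
  qed
  moreover have "a = a * 1 + b * 0" "b = a * 0 + b * 1"
    by simp_all
  then have "{a, b} \<subseteq> {a * r + b * s |r s. True}"
    by blast
  ultimately show "right_ideal_gen {a, b} \<subseteq> {a * r + b * s |r s. True}"
    by (rule right_ideal_gen_least)
next
  have "a \<in> right_ideal_gen {a, b}" "b \<in> right_ideal_gen {a, b}"
    using subset_right_ideal_gen by blast+
  then show "{a * r + b * s |r s. True} \<subseteq> right_ideal_gen {a, b}"
    using right_ideal_right_ideal_gen[of "{a, b}"] unfolding right_ideal_def by blast
qed

lemma right_ideal_gen_singleton: "right_ideal_gen {d} = {d * r |r. True}"
proof -
  have "{d * r + d * s |r s. True} = {d * r |r. True}"
  proof (intro equalityI subsetI)
    fix x assume "x \<in> {d * r + d * s |r s. True}"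
    then obtain r s where "x = d * (r + s)" by (auto simp: distrib_left)
    then show "x \<in> {d * r |r. True}" by blast
  next
    fix x assume "x \<in> {d * r |r. True}"
    then obtain r where "x = d * r + d * 0" by auto
    then show "x \<in> {d * r + d * s |r s. True}" by blast
  qed
  then show ?thesis
    using right_ideal_gen_pair[of d d] by simp
qed

lemma right_ideal_gen_row2_mult_subset:
  fixes a b :: "'a::ring_1"
  assumes "Q \<in> carrier_mat 2 2" "row2 a b * Q = row2 a' b'"
  shows "right_ideal_gen {a', b'} \<subseteq> right_ideal_gen {a, b}"
proof -
  have "a' = a * Q $$ (0, 0) + b * Q $$ (1, 0)" "b' = a * Q $$ (0, 1) + b * Q $$ (1, 1)"
    using assms by (simp_all add: row2_mult row2_eq_iff)
  then have "a' * r + b' * s =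
      a * (Q $$ (0, 0) * r + Q $$ (0, 1) * s) + b * (Q $$ (1, 0) * r + Q $$ (1, 1) * s)" for r s
    by (simp add: algebra_simps)
  then show ?thesis
    unfolding right_ideal_gen_pair by blast
qed

lemma right_ideal_gen_row2_mult:
  fixes a b :: "'a::ring_1"
  assumes "Q \<in> carrier_mat 2 2" "invertible_mat Q" "row2 a b * Q = row2 a' b'"
  shows "right_ideal_gen {a', b'} = right_ideal_gen {a, b}"
proof
  show "right_ideal_gen {a', b'} \<subseteq> right_ideal_gen {a, b}"
    using assms right_ideal_gen_row2_mult_subset by blast
  obtain Q' where Q': "Q' \<in> carrier_mat 2 2" "Q * Q' = 1\<^sub>m 2"
    using assms invertible_mat_iff_inverse by blast
  have "row2 a' b' * Q' = row2 a b * (Q * Q')"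
    using assoc_mult_mat[OF row2_carrier[of a b] assms(1) Q'(1)] assms(3) by simp
  also have "\<dots> = row2 a b"
    using Q' by simp
  finally show "right_ideal_gen {a, b} \<subseteq> right_ideal_gen {a', b'}"
    using Q'(1) right_ideal_gen_row2_mult_subset by blast
qed

lemma fps_right_multiple_of_generator:
  fixes a b d e :: "'a::ring_1 fps"
  assumes "d \<in> right_ideal_gen {a, b}" "b = d * e" "fps_nth e 0 = 0"
  shows "\<exists>c. b = a * c"
proof -
  obtain x y where d: "d = a * x + b * y"
    using assms(1) unfolding right_ideal_gen_pair by blast
  define u where "u = 1 - e * y"
  have "fps_nth u 0 * 1 = 1"
    using assms(3) by (simp add: u_def)
  then have u_inverse: "u * fps_right_inverse u 1 = 1"
    by (rule fps_right_inverse)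
  have "d * u = a * x"
    using d assms(2) by (simp add: u_def algebra_simps)
  then have "d = a * (x * fps_right_inverse u 1)"
    by (metis u_inverse mult.assoc mult_1_right)
  then have "b = a * (x * fps_right_inverse u 1 * e)"
    using assms(2) by (simp add: mult.assoc)
  then show ?thesis ..
qed

interpretation fps_const_hom: ring_hom "fps_const :: 'a::ring_1 \<Rightarrow> 'a fps"
  by unfold_locales simp_all

lemma hermite_ring_fps_reduce_constant_term:
  fixes a b :: "'a::ring_1 fps"
  assumes "hermite_ring TYPE('a)"
  shows "\<exists>Q\<in>carrier_mat 2 2. invertible_mat Q \<and> fps_nth ((row2 a b * Q) $$ (0, 1)) 0 = 0"
proof -
  have "admits_diagonal_reduction (row2 (fps_nth a 0) (fps_nth b 0))"
    using assms unfolding hermite_ring_def by (simp only: row2_carrier)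
  then obtain Q where Q: "Q \<in> carrier_mat 2 2" "invertible_mat Q"
    and entry: "(row2 (fps_nth a 0) (fps_nth b 0) * Q) $$ (0, 1) = 0"
    unfolding admits_diagonal_reduction_row2_iff by blast
  have lifted: "map_mat fps_const Q \<in> carrier_mat 2 2"
    using Q(1) by simp
  have "fps_nth ((row2 a b * map_mat fps_const Q) $$ (0, 1)) 0 = 0"
    using entry Q(1) unfolding row2_mult[OF lifted] row2_mult[OF Q(1)] row2_index by simp
  then show ?thesis
    using lifted fps_const_hom.invertible_mat_hom[OF Q] by blast
qed

theorem proposition3p1:
  assumes "hermite_ring TYPE('a::ring_1)"
    and "bezout_ring TYPE('a fps)"
  shows "hermite_ring TYPE('a fps)"
  unfolding hermite_ring_def
proof (intro allI impI)
  fix A :: "'a fps mat"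
  assume "A \<in> carrier_mat 1 2"
  then obtain a b where A: "A = row2 a b"
    by (rule carrier_mat_1_2_row2)
  obtain d where d: "right_ideal_gen {a, b} = right_ideal_gen {d}"
    using assms(2) unfolding bezout_ring_def by (meson finite.emptyI finite.insertI)
  have "a \<in> right_ideal_gen {d}" "b \<in> right_ideal_gen {d}"
    unfolding d[symmetric] using subset_right_ideal_gen[of "{a, b}"] by blast+
  then obtain a\<^sub>1 b\<^sub>1 where a: "a = d * a\<^sub>1" and b: "b = d * b\<^sub>1"
    unfolding right_ideal_gen_singleton by blast
  obtain Q where Q: "Q \<in> carrier_mat 2 2" "invertible_mat Q"
    and constant_term: "fps_nth ((row2 a\<^sub>1 b\<^sub>1 * Q) $$ (0, 1)) 0 = 0"
    using hermite_ring_fps_reduce_constant_term[OF assms(1)] by blast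
  obtain a' b' where AQ: "row2 a b * Q = row2 a' b'"
    using Q(1) by (metis carrier_mat_1_2_row2 mult_carrier_mat row2_carrier)
  have "b' = d * (row2 a\<^sub>1 b\<^sub>1 * Q) $$ (0, 1)"
    using AQ Q(1) unfolding a b row2_mult[OF Q(1)] row2_eq_iff row2_index by (simp add: algebra_simps)
  moreover have "d \<in> right_ideal_gen {a', b'}"
    using right_ideal_gen_row2_mult[OF Q AQ] d subset_right_ideal_gen by blast
  ultimately obtain c where "b' = a' * c"
    using fps_right_multiple_of_generator constant_term by blast
  then show "admits_diagonal_reduction A"
    unfolding A using admits_diagonal_reduction_row2_mult[OF Q AQ]
      admits_diagonal_reduction_row2_left_multiple by blast
qed

end
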